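(* Let $G$ be a graph with at most $n$ nodes, let $v$ be any node of $G$ and let $T$ be any trail. Then it can be verified, using only $\mathcal{V}^{2n-1}(v)$, whether $T$ is feasible from $v$ in $G$.
   Context: $G$ is a finite connected undirected graph with unlabeled nodes, where at each node of degree $d$ the incident edges have distinct port numbers $0,\dots,d-1$. Truncated views: $\mathcal{V}^0(v)$ is a single node; $\mathcal{V}^{l+1}(v)$ is the port-labeled rooted tree whose root has, for each neighbor $v_i$ of $v$, a child joined by an edge carrying the port number of $\{v,v_i\}$ at $v$ (root side) and at $v_i$ (child side), this child being the root of a copy of $\mathcal{V}^l(v_i)$. A trail is any finite sequence of non-negative integers. For a walk (not necessarily simple path) $R=(\{v_1,v_2\},\dots,\{v_{j-1},v_j\})$ in $G$, its trail is $(p_1,\dots,p_{2j-2})$ where $p_{2i-1}$ and $p_{2i}$ are the port numbers of $\{v_i,v_{i+1}\}$ at $v_i$ and at $v_{i+1}$. A trail $T$ is feasible from $v$ if there exists such a walk $R$ starting at $v_1=v$ whose trail equals $T$. *)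

theory Defs
  imports Main
begin

text \<open>A port-labeled graph: vertex set V, undirected edge set E (2-element sets),
  and port function P, where P v u is the port number of edge {v,u} at v.\<close>

definition nbrs :: "'a set set \<Rightarrow> 'a \<Rightarrow> 'a set" where
  "nbrs E v = {u. {v, u} \<in> E}"

definition port_graph :: "'a set \<Rightarrow> 'a set set \<Rightarrow> ('a \<Rightarrow> 'a \<Rightarrow> nat) \<Rightarrow> bool" where
  "port_graph V E P \<longleftrightarrow>
     finite V \<and>
     (\<forall>e\<in>E. \<exists>u w. e = {u, w} \<and> u \<in> V \<and> w \<in> V \<and> u \<noteq> w) \<and>
     (\<forall>u\<in>V. \<forall>w\<in>V. (u, w) \<in> {(x, y). {x, y} \<in> E}\<^sup>*) \<and>
     (\<forall>v\<in>V. bij_betw (P v) (nbrs E v) {0..<card (nbrs E v)})"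

definition deg :: "'a set set \<Rightarrow> 'a \<Rightarrow> nat" where
  "deg E v = card (nbrs E v)"

definition nb :: "'a set set \<Rightarrow> ('a \<Rightarrow> 'a \<Rightarrow> nat) \<Rightarrow> 'a \<Rightarrow> nat \<Rightarrow> 'a" where
  "nb E P v i = (THE u. u \<in> nbrs E v \<and> P v u = i)"

text \<open>Children of a node are listed in order of
  their root-side port number (these are distinct and equal 0..d-1 in a view);
  each entry stores the child-side port and the subtree.\<close>
datatype ptree = PNode "(nat \<times> ptree) list"

fun view :: "'a set set \<Rightarrow> ('a \<Rightarrow> 'a \<Rightarrow> nat) \<Rightarrow> nat \<Rightarrow> 'a \<Rightarrow> ptree" where
  "view E P 0 v = PNode []"
| "view E P (Suc l) v =
     PNode (map (\<lambda>i. (P (nb E P v i) v, view E P l (nb E P v i))) [0..<deg E v])"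

fun is_walk :: "'a set set \<Rightarrow> 'a list \<Rightarrow> bool" where
  "is_walk E [] = False"
| "is_walk E [v] = True"
| "is_walk E (u # w # vs) \<longleftrightarrow> {u, w} \<in> E \<and> is_walk E (w # vs)"

fun trail_of :: "('a \<Rightarrow> 'a \<Rightarrow> nat) \<Rightarrow> 'a list \<Rightarrow> nat list" where
  "trail_of P [] = []"
| "trail_of P [v] = []"
| "trail_of P (u # w # vs) = P u w # P w u # trail_of P (w # vs)"

definition feasible :: "'a set set \<Rightarrow> ('a \<Rightarrow> 'a \<Rightarrow> nat) \<Rightarrow> nat list \<Rightarrow> 'a \<Rightarrow> bool" where
  "feasible E P T v \<longleftrightarrow> (\<exists>vs. is_walk E vs \<and> hd vs = v \<and> trail_of P vs = T)"

end

theory Submission imports Defs begin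

text \<open>The views of depth l of the nodes of the disjoint union of two graphs induce a
  sequence of partitions of its at most 2n nodes, each refining the previous one. Once a
  refinement step does not split any class, no later step does, since the classes at the next
  depth are determined by those of the neighbours. Hence the number of classes grows strictly until it
  stabilises, which happens before depth 2n - 1; two nodes with equal views of depth 2n - 1
  therefore have equal views of every depth. Equal views of every depth let a walk from one
  node be copied port by port from the other, with the same trail.\<close>

definition stable_depth :: "'u set \<Rightarrow> (nat \<Rightarrow> 'u \<Rightarrow> 'c) \<Rightarrow> nat \<Rightarrow> bool" where
  "stable_depth U f k \<longleftrightarrow>
     (\<forall>x\<in>U. \<forall>y\<in>U. f k x = f k y \<longrightarrow> f (Suc k) x = f (Suc k) y)"

locale stabilising_refinement =
  fixes U :: "'u set" and f :: "nat \<Rightarrow> 'u \<Rightarrow> 'c" and r :: "nat \<Rightarrow> 'c \<Rightarrow> 'c"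
  assumes finite_U: "finite U"
    and refines: "r k (f (Suc k) u) = f k u"
    and stable_depth_Suc: "stable_depth U f k \<Longrightarrow> stable_depth U f (Suc k)"
begin

lemma eq_at_lower_depth:
  assumes "f m x = f m y" and "k \<le> m"
  shows "f k x = f k y"
  using assms(2,1)
proof (induction rule: inc_induct)
  case (step n)
  then show ?case by (metis refines)
qed

lemma classes_eq_image_refines: "f k ` U = r k ` f (Suc k) ` U"
  by (simp add: image_image refines)

lemma card_classes_less_if_unstable:
  assumes unstable: "\<not> stable_depth U f k"
  shows "card (f k ` U) < card (f (Suc k) ` U)"
proof (rule ccontr)
  assume "\<not> ?thesis"
  moreover have "card (r k ` f (Suc k) ` U) \<le> card (f (Suc k) ` U)"
    using finite_U by (intro card_image_le) simp
  ultimately have "card (r k ` f (Suc k) ` U) = card (f (Suc k) ` U)"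
    using classes_eq_image_refines[of k] by (simp only:)
  then have inj: "inj_on (r k) (f (Suc k) ` U)"
    using finite_U by (simp add: eq_card_imp_inj_on)
  have "stable_depth U f k"
    unfolding stable_depth_def
  proof (intro ballI impI)
    fix x y assume "x \<in> U" "y \<in> U" "f k x = f k y"
    then have "r k (f (Suc k) x) = r k (f (Suc k) y)"
      by (simp only: refines)
    with \<open>x \<in> U\<close> \<open>y \<in> U\<close> show "f (Suc k) x = f (Suc k) y"
      by (blast intro: inj_onD[OF inj])
  qed
  with unstable show False ..
qed

lemma stable_depth_le:
  assumes "stable_depth U f j" and "j \<le> k"
  shows "stable_depth U f k"
  using assms(2,1)
proof (induction rule: dec_induct)
  case (step i)
  then show ?case by (blast intro: stable_depth_Suc)
qed

lemma card_classes_ge_if_unstable: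
  assumes "U \<noteq> {}" and "\<forall>j<k. \<not> stable_depth U f j"
  shows "Suc k \<le> card (f k ` U)"
  using assms(2)
proof (induction k)
  case 0
  show ?case
    using finite_U \<open>U \<noteq> {}\<close> by (simp add: Suc_leI card_gt_0_iff)
next
  case (Suc k)
  then show ?case
    using card_classes_less_if_unstable[of k] by fastforce
qed

text \<open>If no step before m is stable, f m takes at least Suc m \<ge> card U values, so it is
  injective on U and the claim is trivial.\<close>

lemma eq_all_depths:
  assumes x: "x \<in> U" and y: "y \<in> U"
    and card: "card U \<le> Suc m" and eq: "f m x = f m y"
  shows "f k x = f k y"
proof (cases "\<exists>j<m. stable_depth U f j")
  case True
  then obtain j where "j < m" "stable_depth U f j" by blast
  then have stable: "stable_depth U f i" if "m \<le> i" for i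
    using stable_depth_le that by (meson less_imp_le order_trans)
  have "f i x = f i y" if "m \<le> i" for i
    using that
  proof (induction rule: dec_induct)
    case base
    show ?case by (fact eq)
  next
    case (step i)
    then show ?case
      using stable x y unfolding stable_depth_def by blast
  qed
  then show ?thesis
    using eq_at_lower_depth[OF eq] by (cases "k \<le> m") simp_all
next
  case False
  then have "Suc m \<le> card (f m ` U)"
    using card_classes_ge_if_unstable x by blast
  with card have "card (f m ` U) = card U"
    using card_image_le[OF finite_U, of "f m"] by linarith
  then have "inj_on (f m) U"
    using finite_U by (simp add: eq_card_imp_inj_on)
  with x y eq show ?thesis
    by (metis inj_on_def)
qed

end

text \<open>Unlike view, this applies
  to disjoint unions of graphs, which are not connected.\<close>

fun gen_view :: "('v \<Rightarrow> nat) \<Rightarrow> ('v \<Rightarrow> nat \<Rightarrow> nat) \<Rightarrow> ('v \<Rightarrow> nat \<Rightarrow> 'v) \<Rightarrow> nat \<Rightarrow> 'v \<Rightarrow> ptree"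
where
  "gen_view d p s 0 v = PNode []"
| "gen_view d p s (Suc l) v = PNode (map (\<lambda>i. (p v i, gen_view d p s l (s v i))) [0..<d v])"

fun trunc :: "nat \<Rightarrow> ptree \<Rightarrow> ptree" where
  "trunc 0 t = PNode []"
| "trunc (Suc l) (PNode cs) = PNode (map (\<lambda>(q, t). (q, trunc l t)) cs)"

lemma trunc_gen_view: "trunc l (gen_view d p s (Suc l) v) = gen_view d p s l v"
  by (induction l arbitrary: v) auto

lemma gen_view_Suc_eq_iff:
  "gen_view d p s (Suc l) x = gen_view d p s (Suc l) y \<longleftrightarrow> d x = d y \<and>
     (\<forall>i<d x. p x i = p y i \<and> gen_view d p s l (s x i) = gen_view d p s l (s y i))"
  by (auto simp: list_eq_iff_nth_eq dest: arg_cong[where f = length])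

lemma stable_depth_gen_view_Suc:
  assumes closed: "\<forall>u\<in>U. \<forall>i<d u. s u i \<in> U"
    and stable: "stable_depth U (gen_view d p s) k"
  shows "stable_depth U (gen_view d p s) (Suc k)"
  unfolding stable_depth_def
proof (intro ballI impI)
  fix x y assume x: "x \<in> U" and y: "y \<in> U"
    and "gen_view d p s (Suc k) x = gen_view d p s (Suc k) y"
  then have deg: "d x = d y"
    and children: "\<forall>i<d x. p x i = p y i \<and> gen_view d p s k (s x i) = gen_view d p s k (s y i)"
    unfolding gen_view_Suc_eq_iff by simp_all
  have "gen_view d p s (Suc k) (s x i) = gen_view d p s (Suc k) (s y i)" if "i < d x" for i
    using stable children closed x y deg that unfolding stable_depth_def by auto
  with deg children show "gen_view d p s (Suc (Suc k)) x = gen_view d p s (Suc (Suc k)) y"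
    by (simp only: gen_view_Suc_eq_iff) blast
qed

lemma gen_view_eq_all_depths:
  assumes "finite U" and closed: "\<forall>u\<in>U. \<forall>i<d u. s u i \<in> U"
    and "x \<in> U" and "y \<in> U" and "card U \<le> Suc m"
    and "gen_view d p s m x = gen_view d p s m y"
  shows "gen_view d p s k x = gen_view d p s k y"
proof -
  interpret stabilising_refinement U "gen_view d p s" trunc
    using assms(1) trunc_gen_view stable_depth_gen_view_Suc[OF closed]
    by unfold_locales
  show ?thesis
    using eq_all_depths assms(3-6) by blast
qed

lemma gen_view_Plus:
  "gen_view (case_sum d d') (case_sum p p') (\<lambda>u i. map_sum (\<lambda>a. s a i) (\<lambda>b. s' b i) u) l (Inl a)
     = gen_view d p s l a"
  "gen_view (case_sum d d') (case_sum p p') (\<lambda>u i. map_sum (\<lambda>a. s a i) (\<lambda>b. s' b i) u) l (Inr b)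
     = gen_view d' p' s' l b"
  by (induction l arbitrary: a b) auto

lemma view_eq_gen_view: "view E P l v = gen_view (deg E) (\<lambda>v i. P (nb E P v i) v) (nb E P) l v"
  by (induction l arbitrary: v) auto

lemma view_Suc_eq_iff:
  "view E P (Suc l) x = view E' P' (Suc l) y \<longleftrightarrow> deg E x = deg E' y \<and>
     (\<forall>i<deg E x. P (nb E P x i) x = P' (nb E' P' y i) y \<and>
        view E P l (nb E P x i) = view E' P' l (nb E' P' y i))"
  by (auto simp: list_eq_iff_nth_eq dest: arg_cong[where f = length])

lemma port_graph_finite: "port_graph V E P \<Longrightarrow> finite V"
  unfolding port_graph_def by blast

lemma port_bij:
  assumes "port_graph V E P" and "x \<in> V"
  shows "bij_betw (P x) (nbrs E x) {0..<deg E x}"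
  using assms unfolding port_graph_def deg_def by blast

lemma nb_in_nbrs_port:
  assumes "port_graph V E P" and "x \<in> V" and "i < deg E x"
  shows "nb E P x i \<in> nbrs E x \<and> P x (nb E P x i) = i"
proof -
  have bij: "bij_betw (P x) (nbrs E x) {0..<deg E x}"
    using port_bij[OF assms(1,2)] .
  then obtain u where u: "u \<in> nbrs E x" "P x u = i"
    using assms(3) by (metis atLeastLessThan_iff bij_betw_iff_bijections zero_le)
  moreover have "w = u" if "w \<in> nbrs E x" "P x w = i" for w
    using bij u that by (metis bij_betw_iff_bijections)
  ultimately have "nb E P x i = u"
    unfolding nb_def by (intro the_equality) blast+
  with u show ?thesis by simp
qed

lemma nb_port:
  assumes "port_graph V E P" and "x \<in> V" and "w \<in> nbrs E x"
  shows "P x w < deg E x \<and> nb E P x (P x w) = w"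
proof -
  have bij: "bij_betw (P x) (nbrs E x) {0..<deg E x}"
    using port_bij[OF assms(1,2)] .
  then have lt: "P x w < deg E x"
    using assms(3) by (auto dest: bij_betwE)
  moreover have "nb E P x (P x w) = w"
    using bij assms(3) nb_in_nbrs_port[OF assms(1,2) lt] by (auto simp: bij_betw_def dest: inj_onD)
  ultimately show ?thesis ..
qed

lemma nbrs_subset_vertices:
  assumes "port_graph V E P"
  shows "nbrs E x \<subseteq> V"
proof
  fix w assume "w \<in> nbrs E x"
  then have "{x, w} \<in> E" by (simp add: nbrs_def)
  moreover have "\<forall>e\<in>E. \<exists>u w. e = {u, w} \<and> u \<in> V \<and> w \<in> V \<and> u \<noteq> w"
    using assms unfolding port_graph_def by (elim conjE)
  ultimately obtain a b where "{x, w} = {a, b}" "a \<in> V" "b \<in> V"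
    by blast
  then show "w \<in> V" by (auto simp: doubleton_eq_iff)
qed

lemma nb_in_vertices:
  assumes "port_graph V E P" and "x \<in> V" and "i < deg E x"
  shows "nb E P x i \<in> V"
  using nb_in_nbrs_port[OF assms] nbrs_subset_vertices[OF assms(1)] by blast

lemma port_graph_views_eq_all_depths:
  assumes G: "port_graph V E P" and G': "port_graph V' E' P'"
    and "v \<in> V" and "v' \<in> V'" and "card V + card V' \<le> Suc m"
    and "view E P m v = view E' P' m v'"
  shows "view E P k v = view E' P' k v'"
proof -
  define d where "d = case_sum (deg E) (deg E')"
  define p where "p = case_sum (\<lambda>v i. P (nb E P v i) v) (\<lambda>v i. P' (nb E' P' v i) v)"
  define s where "s = (\<lambda>u i. map_sum (\<lambda>a. nb E P a i) (\<lambda>b. nb E' P' b i) u)"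
  have view_Inl: "gen_view d p s l (Inl a) = view E P l a"
    and view_Inr: "gen_view d p s l (Inr b) = view E' P' l b" for l a b
    by (simp_all add: d_def p_def s_def view_eq_gen_view gen_view_Plus)
  have finite: "finite (V <+> V')"
    using port_graph_finite[OF G] port_graph_finite[OF G'] by simp
  have closed: "\<forall>u\<in>V <+> V'. \<forall>i<d u. s u i \<in> V <+> V'"
  proof (intro ballI allI impI)
    fix u i assume "u \<in> V <+> V'" and "i < d u"
    then show "s u i \<in> V <+> V'"
      unfolding d_def s_def
      by (elim PlusE) (auto intro: nb_in_vertices[OF G] nb_in_vertices[OF G'])
  qed
  have card: "card (V <+> V') \<le> Suc m"
    using port_graph_finite[OF G] port_graph_finite[OF G'] assms(5) by (simp add: card_Plus)
  have "gen_view d p s m (Inl v) = gen_view d p s m (Inr v')"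
    using assms(6) by (simp only: view_Inl view_Inr)
  then have "gen_view d p s k (Inl v) = gen_view d p s k (Inr v')"
    using gen_view_eq_all_depths[OF finite closed InlI InrI card] assms(3,4) by blast
  then show ?thesis
    by (simp only: view_Inl view_Inr)
qed

lemma view_eq_neighbour:
  assumes G: "port_graph V E P" and G': "port_graph V' E' P'"
    and x: "x \<in> V" and y: "y \<in> V'" and views: "\<And>k. view E P k x = view E' P' k y"
    and edge: "{x, w} \<in> E"
  obtains w' where "{y, w'} \<in> E'" and "P' y w' = P x w" and "P' w' y = P w x"
    and "w \<in> V" and "w' \<in> V'" and "\<And>k. view E P k w = view E' P' k w'"
proof -
  have w: "w \<in> nbrs E x"
    using edge by (simp add: nbrs_def)
  define i where "i = P x w"
  have i: "i < deg E x" "nb E P x i = w"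
    using nb_port[OF G x w] by (simp_all add: i_def)
  have children: "deg E x = deg E' y \<and> (\<forall>i<deg E x. P (nb E P x i) x = P' (nb E' P' y i) y \<and>
      view E P k (nb E P x i) = view E' P' k (nb E' P' y i))" for k
    using views[of "Suc k"] unfolding view_Suc_eq_iff .
  define w' where "w' = nb E' P' y i"
  have "i < deg E' y"
    using children[of 0] i(1) by simp
  then have w': "w' \<in> nbrs E' y" "P' y w' = i"
    using nb_in_nbrs_port[OF G' y] by (simp_all add: w'_def)
  show thesis
  proof (rule that)
    show "{y, w'} \<in> E'"
      using w'(1) by (simp add: nbrs_def)
    show "P' y w' = P x w"
      using w'(2) by (simp add: i_def)
    show "P' w' y = P w x" and "view E P k w = view E' P' k w'" for k
      using children[of k] i by (auto simp: w'_def)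
    show "w \<in> V" and "w' \<in> V'"
      using w w'(1) nbrs_subset_vertices[OF G] nbrs_subset_vertices[OF G'] by blast+
  qed
qed

lemma walk_transfer:
  assumes G: "port_graph V E P" and G': "port_graph V' E' P'"
  shows "is_walk E (x # vs) \<Longrightarrow> x \<in> V \<Longrightarrow> y \<in> V' \<Longrightarrow> (\<And>k. view E P k x = view E' P' k y) \<Longrightarrow>
    \<exists>ws. is_walk E' (y # ws) \<and> trail_of P' (y # ws) = trail_of P (x # vs)"
proof (induction vs arbitrary: x y)
  case Nil
  show ?case by (intro exI[of _ "[]"]) simp
next
  case (Cons w vs)
  then have edge: "{x, w} \<in> E" and walk: "is_walk E (w # vs)"
    by simp_all
  obtain w' where "{y, w'} \<in> E'" "P' y w' = P x w" "P' w' y = P w x"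
    and "w \<in> V" "w' \<in> V'" "\<And>k. view E P k w = view E' P' k w'"
    using view_eq_neighbour[OF G G' Cons.prems(2-4) edge] by blast
  moreover obtain ws where "is_walk E' (w' # ws)" "trail_of P' (w' # ws) = trail_of P (w # vs)"
    using Cons.IH[OF walk] calculation by blast
  ultimately show ?case
    by (intro exI[of _ "w' # ws"]) simp
qed

lemma feasible_transfer:
  assumes G: "port_graph V E P" and G': "port_graph V' E' P'"
    and "x \<in> V" and "y \<in> V'" and "\<And>k. view E P k x = view E' P' k y"
    and "feasible E P T x"
  shows "feasible E' P' T y"
proof -
  obtain vs where "is_walk E (x # vs)" "trail_of P (x # vs) = T"
    using assms(6) unfolding feasible_def by (metis is_walk.simps(1) list.collapse)
  with walk_transfer[OF G G'] assms(3-5) show ?thesis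
    unfolding feasible_def by (metis list.sel(1))
qed

theorem corollary5p3:
  fixes V :: "'a set" and E :: "'a set set" and P :: "'a \<Rightarrow> 'a \<Rightarrow> nat"
    and V' :: "'b set" and E' :: "'b set set" and P' :: "'b \<Rightarrow> 'b \<Rightarrow> nat"
    and n :: nat and v :: 'a and v' :: 'b and T :: "nat list"
  assumes "port_graph V E P" and "port_graph V' E' P'"
    and "card V \<le> n" and "card V' \<le> n"
    and "v \<in> V" and "v' \<in> V'"
    and "view E P (2 * n - 1) v = view E' P' (2 * n - 1) v'"
  shows "feasible E P T v \<longleftrightarrow> feasible E' P' T v'"
proof -
  have "card V + card V' \<le> Suc (2 * n - 1)"
    using assms(3,4) by linarith
  then have views: "view E P k v = view E' P' k v'" for k
    using port_graph_views_eq_all_depths[OF assms(1,2,5,6) _ assms(7)] by blast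
  show ?thesis
    using feasible_transfer[OF assms(1,2,5,6) views] feasible_transfer[OF assms(2,1,6,5) views[symmetric]]
    by blast
qed

end
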